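(* For every very-WSTS $\mathcal{S}$, the system $\mathcal{S}_\bot$ is a very-WSTS. Moreover, if $\mathcal{S}$ is positive, then $\mathcal{S}_\bot$ is positive.
   Context: A (labeled, ordered) transition system is $\mathcal{S}=(X,\xrightarrow{\Sigma},\le)$: $X$ a set, $\Sigma$ a finite alphabet, $\xrightarrow{a}\subseteq X\times X$, $\le$ a quasi-ordering; relations extend to words. $\mathrm{Post}(x,w)=\{y:x\xrightarrow{w}y\}$, extended to sets by union; $\downarrow D=\{x:\exists y\in D,\,x\le y\}$. WSTS: $\le$ a wqo and $x\xrightarrow{a}y$, $x'\ge x$ imply $x'\xrightarrow{w}y'\ge y$ for some $w$. Strong monotonicity: $x\xrightarrow{a}y$, $x'\ge x$ imply $x'\xrightarrow{a}y'$ with $y'\ge y$; strong-strict: additionally $x'>x$ gives $y'>y$. Deterministic: at most one $a$-successor. Ideals: nonempty downward-closed directed subsets, set $\mathrm{Idl}(X)$. Completion $\widehat{\mathcal{S}}=(\mathrm{Idl}(X),\Rightarrow_\Sigma,\subseteq)$ with $I\xRightarrow{a}J$ iff $J$ is a $\subseteq$-maximal ideal included in $\downarrow\mathrm{Post}(I,a)$. Levels: $\mathrm{Idl}_0(X)=\mathrm{Idl}(X)$, $\mathrm{Idl}_n(X)$ = unions of strictly increasing sequences in $\mathrm{Idl}_{n-1}(X)$; finitely many levels if some $\mathrm{Idl}_n(X)=\emptyset$. Very-WSTS: WSTS with strong monotonicity whose completion is a deterministic WSTS ($\subseteq$ a wqo on ideals, monotone) with strong-strict monotonicity, and $\mathrm{Idl}(X)$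 has finitely many levels. Positivity: $w$ is positive for $x$ if $x\xrightarrow{w}z$ for some $z\ge x$; $w$ is positive if positive for every $x$ with $\mathrm{Post}(x,w)\ne\emptyset$; a system is positive if every word positive for some state is positive. $\mathcal{S}_\bot=(X\cup\{\bot\},\xrightarrow{\Sigma},\le_\bot)$, where $\bot\notin X$ is a new state with no transitions (transition relations unchanged) and $\le_\bot=\le\cup\{(\bot,y):y\in X\cup\{\bot\}\}$. *)

theory Defs
  imports Main
begin

definition qo_on :: "'a set \<Rightarrow> ('a \<Rightarrow> 'a \<Rightarrow> bool) \<Rightarrow> bool" where
  "qo_on X le \<longleftrightarrow> (\<forall>x\<in>X. le x x) \<and>
     (\<forall>x\<in>X. \<forall>y\<in>X. \<forall>z\<in>X. le x y \<longrightarrow> le y z \<longrightarrow> le x z)"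

definition wqo_on :: "'a set \<Rightarrow> ('a \<Rightarrow> 'a \<Rightarrow> bool) \<Rightarrow> bool" where
  "wqo_on X le \<longleftrightarrow> qo_on X le \<and>
     (\<forall>f::nat \<Rightarrow> 'a. (\<forall>i. f i \<in> X) \<longrightarrow> (\<exists>i j. i < j \<and> le (f i) (f j)))"

definition lt_of :: "('a \<Rightarrow> 'a \<Rightarrow> bool) \<Rightarrow> 'a \<Rightarrow> 'a \<Rightarrow> bool" where
  "lt_of le x y \<longleftrightarrow> le x y \<and> \<not> le y x"

definition ts :: "'a set \<Rightarrow> 'l set \<Rightarrow> ('l \<Rightarrow> 'a \<Rightarrow> 'a \<Rightarrow> bool) \<Rightarrow> ('a \<Rightarrow> 'a \<Rightarrow> bool) \<Rightarrow> bool" where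
  "ts X Sig T le \<longleftrightarrow> finite Sig \<and> qo_on X le \<and>
     (\<forall>a x y. T a x y \<longrightarrow> x \<in> X \<and> y \<in> X)"

fun steps :: "('l \<Rightarrow> 'a \<Rightarrow> 'a \<Rightarrow> bool) \<Rightarrow> 'l list \<Rightarrow> 'a \<Rightarrow> 'a \<Rightarrow> bool" where
  "steps T [] x y \<longleftrightarrow> x = y"
| "steps T (a # w) x y \<longleftrightarrow> (\<exists>z. T a x z \<and> steps T w z y)"

definition Post :: "('l \<Rightarrow> 'a \<Rightarrow> 'a \<Rightarrow> bool) \<Rightarrow> 'a \<Rightarrow> 'l list \<Rightarrow> 'a set" where
  "Post T x w = {y. steps T w x y}"

definition PostS :: "('l \<Rightarrow> 'a \<Rightarrow> 'a \<Rightarrow> bool) \<Rightarrow> 'a set \<Rightarrow> 'l list \<Rightarrow> 'a set" where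
  "PostS T A w = (\<Union>x\<in>A. Post T x w)"

definition down :: "'a set \<Rightarrow> ('a \<Rightarrow> 'a \<Rightarrow> bool) \<Rightarrow> 'a set \<Rightarrow> 'a set" where
  "down X le D = {x \<in> X. \<exists>y\<in>D. le x y}"

definition is_ideal :: "'a set \<Rightarrow> ('a \<Rightarrow> 'a \<Rightarrow> bool) \<Rightarrow> 'a set \<Rightarrow> bool" where
  "is_ideal X le I \<longleftrightarrow> I \<noteq> {} \<and> I \<subseteq> X \<and>
     (\<forall>x\<in>X. \<forall>y\<in>I. le x y \<longrightarrow> x \<in> I) \<and>
     (\<forall>x\<in>I. \<forall>y\<in>I. \<exists>z\<in>I. le x z \<and> le y z)"

definition Idl :: "'a set \<Rightarrow> ('a \<Rightarrow> 'a \<Rightarrow> bool) \<Rightarrow> 'a set set" where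
  "Idl X le = {I. is_ideal X le I}"

definition compl_trans :: "'a set \<Rightarrow> ('a \<Rightarrow> 'a \<Rightarrow> bool) \<Rightarrow> ('l \<Rightarrow> 'a \<Rightarrow> 'a \<Rightarrow> bool)
    \<Rightarrow> 'l \<Rightarrow> 'a set \<Rightarrow> 'a set \<Rightarrow> bool" where
  "compl_trans X le T a I J \<longleftrightarrow> I \<in> Idl X le \<and> J \<in> Idl X le \<and>
     J \<subseteq> down X le (PostS T I [a]) \<and>
     (\<forall>J'\<in>Idl X le. J \<subseteq> J' \<and> J' \<subseteq> down X le (PostS T I [a]) \<longrightarrow> J' = J)"

fun Idl_level :: "'a set \<Rightarrow> ('a \<Rightarrow> 'a \<Rightarrow> bool) \<Rightarrow> nat \<Rightarrow> 'a set set" where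
  "Idl_level X le 0 = Idl X le"
| "Idl_level X le (Suc n) = {\<Union>(range f) | f. (\<forall>i. f i \<in> Idl_level X le n) \<and> (\<forall>i. f i \<subset> f (Suc i))}"

definition finitely_many_levels :: "'a set \<Rightarrow> ('a \<Rightarrow> 'a \<Rightarrow> bool) \<Rightarrow> bool" where
  "finitely_many_levels X le \<longleftrightarrow> (\<exists>n. Idl_level X le n = {})"

definition wsts :: "'a set \<Rightarrow> 'l set \<Rightarrow> ('l \<Rightarrow> 'a \<Rightarrow> 'a \<Rightarrow> bool) \<Rightarrow> ('a \<Rightarrow> 'a \<Rightarrow> bool) \<Rightarrow> bool" where
  "wsts X Sig T le \<longleftrightarrow> ts X Sig T le \<and> wqo_on X le \<and>
     (\<forall>a\<in>Sig. \<forall>x y x'. T a x y \<longrightarrow> x' \<in> X \<longrightarrow> le x x' \<longrightarrow>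
        (\<exists>w\<in>lists Sig. \<exists>y'. steps T w x' y' \<and> le y y'))"

definition strong_mono :: "'a set \<Rightarrow> 'l set \<Rightarrow> ('l \<Rightarrow> 'a \<Rightarrow> 'a \<Rightarrow> bool) \<Rightarrow> ('a \<Rightarrow> 'a \<Rightarrow> bool) \<Rightarrow> bool" where
  "strong_mono X Sig T le \<longleftrightarrow>
     (\<forall>a\<in>Sig. \<forall>x y x'. T a x y \<longrightarrow> x' \<in> X \<longrightarrow> le x x' \<longrightarrow> (\<exists>y'. T a x' y' \<and> le y y'))"

definition strong_strict_mono :: "'a set \<Rightarrow> 'l set \<Rightarrow> ('l \<Rightarrow> 'a \<Rightarrow> 'a \<Rightarrow> bool) \<Rightarrow> ('a \<Rightarrow> 'a \<Rightarrow> bool) \<Rightarrow> bool" where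
  "strong_strict_mono X Sig T le \<longleftrightarrow> strong_mono X Sig T le \<and>
     (\<forall>a\<in>Sig. \<forall>x y x'. T a x y \<longrightarrow> x' \<in> X \<longrightarrow> lt_of le x x' \<longrightarrow>
        (\<exists>y'. T a x' y' \<and> lt_of le y y'))"

definition deterministic :: "'l set \<Rightarrow> ('l \<Rightarrow> 'a \<Rightarrow> 'a \<Rightarrow> bool) \<Rightarrow> bool" where
  "deterministic Sig T \<longleftrightarrow> (\<forall>a\<in>Sig. \<forall>x y y'. T a x y \<longrightarrow> T a x y' \<longrightarrow> y = y')"

definition very_wsts :: "'a set \<Rightarrow> 'l set \<Rightarrow> ('l \<Rightarrow> 'a \<Rightarrow> 'a \<Rightarrow> bool) \<Rightarrow> ('a \<Rightarrow> 'a \<Rightarrow> bool) \<Rightarrow> bool" where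
  "very_wsts X Sig T le \<longleftrightarrow> wsts X Sig T le \<and> strong_mono X Sig T le \<and>
     wsts (Idl X le) Sig (compl_trans X le T) (\<subseteq>) \<and>
     deterministic Sig (compl_trans X le T) \<and>
     strong_strict_mono (Idl X le) Sig (compl_trans X le T) (\<subseteq>) \<and>
     finitely_many_levels X le"

definition positive_for :: "('l \<Rightarrow> 'a \<Rightarrow> 'a \<Rightarrow> bool) \<Rightarrow> ('a \<Rightarrow> 'a \<Rightarrow> bool) \<Rightarrow> 'l list \<Rightarrow> 'a \<Rightarrow> bool" where
  "positive_for T le w x \<longleftrightarrow> (\<exists>z. steps T w x z \<and> le x z)"

definition positive_word :: "'a set \<Rightarrow> ('l \<Rightarrow> 'a \<Rightarrow> 'a \<Rightarrow> bool) \<Rightarrow> ('a \<Rightarrow> 'a \<Rightarrow> bool) \<Rightarrow> 'l list \<Rightarrow> bool" where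
  "positive_word X T le w \<longleftrightarrow> (\<forall>x\<in>X. Post T x w \<noteq> {} \<longrightarrow> positive_for T le w x)"

definition positive_sys :: "'a set \<Rightarrow> 'l set \<Rightarrow> ('l \<Rightarrow> 'a \<Rightarrow> 'a \<Rightarrow> bool) \<Rightarrow> ('a \<Rightarrow> 'a \<Rightarrow> bool) \<Rightarrow> bool" where
  "positive_sys X Sig T le \<longleftrightarrow>
     (\<forall>w\<in>lists Sig. (\<exists>x\<in>X. positive_for T le w x) \<longrightarrow> positive_word X T le w)"

text \<open>The system S_bot; the new state bot is None, old states x are Some x.\<close>
definition X_bot :: "'a set \<Rightarrow> 'a option set" where
  "X_bot X = insert None (Some ` X)"

fun T_bot :: "('l \<Rightarrow> 'a \<Rightarrow> 'a \<Rightarrow> bool) \<Rightarrow> 'l \<Rightarrow> 'a option \<Rightarrow> 'a option \<Rightarrow> bool" where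
  "T_bot T a (Some x) (Some y) = T a x y"
| "T_bot T a _ _ = False"

fun le_bot :: "('a \<Rightarrow> 'a \<Rightarrow> bool) \<Rightarrow> 'a option \<Rightarrow> 'a option \<Rightarrow> bool" where
  "le_bot le None _ = True"
| "le_bot le (Some x) None = False"
| "le_bot le (Some x) (Some y) = le x y"

end

theory Submission
  imports Defs
begin

text \<open>Adding \<open>\<bottom>\<close> leaves the system essentially unchanged: the ideals of \<open>S\<^sub>\<bottom>\<close> are
  \<open>{\<bottom>}\<close> and the sets \<open>{\<bottom>} \<union> I\<close> for ideals \<open>I\<close> of \<open>S\<close>. Since \<open>\<bottom>\<close> has no
  successors, \<open>{\<bottom>}\<close> is isolated in the completion, and \<open>I \<Rightarrow>\<^sub>a J\<close> holds in the completion
  of \<open>S\<close> iff \<open>{\<bottom>} \<union> I \<Rightarrow>\<^sub>a {\<bottom>} \<union> J\<close> holds in that of \<open>S\<^sub>\<bottom>\<close>; the target \<open>{\<bottom>}\<close> is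
  never maximal because some principal ideal lies above it. So the completion of \<open>S\<^sub>\<bottom>\<close>
  is that of \<open>S\<close> with a new least element, and a strict chain of ideals of \<open>S\<^sub>\<bottom>\<close> can use
  \<open>{\<bottom>}\<close> only as its first member, so all levels above \<open>0\<close> correspond as well.\<close>

lemma None_in_X_bot [simp]: "None \<in> X_bot X"
  and Some_in_X_bot_iff [simp]: "Some x \<in> X_bot X \<longleftrightarrow> x \<in> X"
  unfolding X_bot_def by auto

lemma le_bot_Some_iff: "le_bot le (Some x) y \<longleftrightarrow> (\<exists>y0. y = Some y0 \<and> le x y0)"
  by (cases y) auto

lemma T_bot_Some_iff: "T_bot T a (Some x) y \<longleftrightarrow> (\<exists>y0. y = Some y0 \<and> T a x y0)"
  by (cases y) auto

lemma steps_T_bot_Some [simp]: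
  "steps (T_bot T) w (Some x) y \<longleftrightarrow> (\<exists>y0. y = Some y0 \<and> steps T w x y0)"
  by (induction w arbitrary: x) (auto simp: T_bot_Some_iff, blast)

lemma steps_T_bot_None [simp]: "steps (T_bot T) w None y \<longleftrightarrow> w = [] \<and> y = None"
  by (cases w) auto

lemma steps_map:
  assumes "steps R w x y" and "\<And>a x y. R a x y \<Longrightarrow> R' a (f x) (f y)"
  shows "steps R' w (f x) (f y)"
  using assms(1) by (induction w arbitrary: x) (auto intro: assms(2))

lemma wqo_on_insert_bottom_image:
  assumes wqo: "wqo_on X le"
    and emb: "\<And>x y. x \<in> X \<Longrightarrow> y \<in> X \<Longrightarrow> le' (f x) (f y) \<longleftrightarrow> le x y"
    and bottom: "\<And>y. y \<in> insert b (f ` X) \<Longrightarrow> le' b y"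
    and not_below_bottom: "\<And>x. x \<in> X \<Longrightarrow> \<not> le' (f x) b"
  shows "wqo_on (insert b (f ` X)) le'"
  unfolding wqo_on_def
proof (intro conjI allI impI)
  let ?Y = "insert b (f ` X)"
  from wqo have qo: "qo_on X le" unfolding wqo_on_def by blast
  show "qo_on ?Y le'"
    unfolding qo_on_def
  proof (intro conjI ballI impI)
    fix y assume "y \<in> ?Y"
    then consider "y = b" | x where "x \<in> X" "y = f x" by blast
    then show "le' y y"
    proof cases
      case 1
      then show ?thesis using bottom by simp
    next
      case 2
      then show ?thesis using qo unfolding qo_on_def by (simp add: emb)
    qed
  next
    fix x y z assume "x \<in> ?Y" "y \<in> ?Y" "z \<in> ?Y" and xy: "le' x y" and yz: "le' y z"
    show "le' x z"
    proof (cases "x = b")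
      case True
      then show ?thesis using bottom \<open>z \<in> ?Y\<close> by simp
    next
      case False
      then obtain x0 where x0: "x0 \<in> X" "x = f x0" using \<open>x \<in> ?Y\<close> by blast
      then obtain y0 where y0: "y0 \<in> X" "y = f y0"
        using \<open>y \<in> ?Y\<close> xy not_below_bottom by blast
      then obtain z0 where z0: "z0 \<in> X" "z = f z0"
        using \<open>z \<in> ?Y\<close> yz not_below_bottom by blast
      have "le x0 y0" "le y0 z0" using xy yz x0 y0 z0 by (simp_all add: emb)
      then have "le x0 z0" using qo x0 y0 z0 unfolding qo_on_def by blast
      then show ?thesis using x0 z0 by (simp add: emb)
    qed
  qed
next
  fix g :: "nat \<Rightarrow> _" assume g: "\<forall>i. g i \<in> insert b (f ` X)"
  show "\<exists>i j. i < j \<and> le' (g i) (g j)"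
  proof (cases "\<exists>i. g i = b")
    case True
    then obtain i where "g i = b" by blast
    then show ?thesis using bottom g by (intro exI[of _ i] exI[of _ "Suc i"]) auto
  next
    case False
    then have "\<forall>i. \<exists>x. x \<in> X \<and> g i = f x" using g by blast
    then obtain h where h: "\<forall>i. h i \<in> X \<and> g i = f (h i)" by (rule choice[THEN exE])
    with wqo obtain i j where "i < j" "le (h i) (h j)" unfolding wqo_on_def by blast
    then show ?thesis using h by (metis emb)
  qed
qed

lemma wqo_on_X_bot: "wqo_on X le \<Longrightarrow> wqo_on (X_bot X) (le_bot le)"
  unfolding X_bot_def by (rule wqo_on_insert_bottom_image[where le = le]) auto

lemma T_bot_le_bot_cases:
  assumes "T_bot T a x y" and "le_bot le x x'" and "x' \<in> X_bot X"
  obtains x0 y0 x0' where "x = Some x0" "y = Some y0" "x' = Some x0'"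
    "T a x0 y0" "le x0 x0'" "x0' \<in> X"
  using assms by (cases x; cases y; cases x') auto

lemma wsts_X_bot:
  assumes "wsts X Sig T le"
  shows "wsts (X_bot X) Sig (T_bot T) (le_bot le)"
  unfolding wsts_def ts_def
proof (intro conjI allI impI ballI)
  show "finite Sig" using assms unfolding wsts_def ts_def by blast
  show "wqo_on (X_bot X) (le_bot le)"
    using assms unfolding wsts_def by (intro wqo_on_X_bot) blast
  then show "qo_on (X_bot X) (le_bot le)" unfolding wqo_on_def by blast
next
  fix a x y assume "T_bot T a x y"
  then obtain x0 y0 where "x = Some x0" "y = Some y0" "T a x0 y0" by (cases x; cases y) auto
  then show "x \<in> X_bot X" "y \<in> X_bot X" using assms unfolding wsts_def ts_def by auto
next
  fix a x y x'
  assume a: "a \<in> Sig" and "T_bot T a x y" "x' \<in> X_bot X" "le_bot le x x'"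
  then obtain x0 y0 x0' where xy: "x' = Some x0'" "y = Some y0"
    and "T a x0 y0" "le x0 x0'" "x0' \<in> X"
    by (elim T_bot_le_bot_cases)
  with assms a obtain w y' where "w \<in> lists Sig" "steps T w x0' y'" "le y0 y'"
    unfolding wsts_def by blast
  then show "\<exists>w\<in>lists Sig. \<exists>y'. steps (T_bot T) w x' y' \<and> le_bot le y y'"
    using xy by (intro bexI[of _ w] exI[of _ "Some y'"]) simp_all
qed

lemma strong_mono_X_bot:
  assumes "strong_mono X Sig T le"
  shows "strong_mono (X_bot X) Sig (T_bot T) (le_bot le)"
  unfolding strong_mono_def
proof (intro allI impI ballI)
  fix a x y x'
  assume a: "a \<in> Sig" and "T_bot T a x y" "x' \<in> X_bot X" "le_bot le x x'"
  then obtain x0 y0 x0' where xy: "x' = Some x0'" "y = Some y0"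
    and "T a x0 y0" "le x0 x0'" "x0' \<in> X"
    by (elim T_bot_le_bot_cases)
  with assms a obtain y' where "T a x0' y'" "le y0 y'"
    unfolding strong_mono_def by blast
  then show "\<exists>y'. T_bot T a x' y' \<and> le_bot le y y'"
    using xy by (intro exI[of _ "Some y'"]) simp
qed

lemma positive_for_T_bot_Some_iff:
  "positive_for (T_bot T) (le_bot le) w (Some x) \<longleftrightarrow> positive_for T le w x"
  unfolding positive_for_def by auto

lemma Post_T_bot_Some: "Post (T_bot T) (Some x) w = Some ` Post T x w"
  unfolding Post_def by auto

lemma Post_T_bot_None: "w \<noteq> [] \<Longrightarrow> Post (T_bot T) None w = {}"
  unfolding Post_def by simp

lemma positive_for_T_bot_None: "w \<noteq> [] \<Longrightarrow> \<not> positive_for (T_bot T) (le_bot le) w None"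
  unfolding positive_for_def by simp

lemma positive_sys_X_bot:
  assumes qo: "qo_on X le" and pos: "positive_sys X Sig T le"
  shows "positive_sys (X_bot X) Sig (T_bot T) (le_bot le)"
  unfolding positive_sys_def positive_word_def
proof (intro ballI impI)
  fix w x
  assume w: "w \<in> lists Sig" and witness: "\<exists>x\<in>X_bot X. positive_for (T_bot T) (le_bot le) w x"
    and x: "x \<in> X_bot X" and Post: "Post (T_bot T) x w \<noteq> {}"
  show "positive_for (T_bot T) (le_bot le) w x"
  proof (cases "w = []")
    case True
    then show ?thesis using qo x unfolding positive_for_def qo_on_def X_bot_def by auto
  next
    case False
    from witness obtain x1 where "x1 \<in> X" "positive_for T le w x1"
      using positive_for_T_bot_None[OF False] unfolding X_bot_def
      by (auto simp: positive_for_T_bot_Some_iff)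
    with pos w have "positive_word X T le w" unfolding positive_sys_def by blast
    moreover obtain x0 where x0: "x = Some x0" "x0 \<in> X"
      using x Post Post_T_bot_None[OF False] unfolding X_bot_def by blast
    moreover have "Post T x0 w \<noteq> {}" using Post by (simp add: x0 Post_T_bot_Some)
    ultimately show ?thesis
      unfolding positive_word_def by (simp add: positive_for_T_bot_Some_iff)
  qed
qed

definition lift_ideal :: "'a set \<Rightarrow> 'a option set" where
  "lift_ideal I = insert None (Some ` I)"

lemma ball_lift_ideal: "(\<forall>x\<in>lift_ideal I. P x) \<longleftrightarrow> P None \<and> (\<forall>x\<in>I. P (Some x))"
  and bex_lift_ideal: "(\<exists>x\<in>lift_ideal I. P x) \<longleftrightarrow> P None \<or> (\<exists>x\<in>I. P (Some x))"
  unfolding lift_ideal_def by auto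

lemma ball_X_bot: "(\<forall>x\<in>X_bot X. P x) \<longleftrightarrow> P None \<and> (\<forall>x\<in>X. P (Some x))"
  unfolding X_bot_def by auto

lemma lift_ideal_subset_iff [simp]: "lift_ideal I \<subseteq> lift_ideal J \<longleftrightarrow> I \<subseteq> J"
  unfolding lift_ideal_def by auto

lemma lift_ideal_inject [simp]: "lift_ideal I = lift_ideal J \<longleftrightarrow> I = J"
  unfolding lift_ideal_def by auto

lemma lift_ideal_empty: "lift_ideal {} = {None}"
  unfolding lift_ideal_def by simp

lemma lift_ideal_nonempty [simp]: "lift_ideal I \<noteq> {}"
  unfolding lift_ideal_def by simp

lemma None_in_lift_ideal [simp]: "None \<in> lift_ideal I"
  and Some_in_lift_ideal_iff [simp]: "Some x \<in> lift_ideal I \<longleftrightarrow> x \<in> I"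
  unfolding lift_ideal_def by auto

lemma is_ideal_X_bot_lift_ideal_iff:
  "is_ideal (X_bot X) (le_bot le) (lift_ideal I) \<longleftrightarrow> I = {} \<or> is_ideal X le I"
proof (cases "I = {}")
  case True
  then show ?thesis
    unfolding is_ideal_def by (simp add: ball_lift_ideal bex_lift_ideal ball_X_bot lift_ideal_def X_bot_def)
next
  case False
  have "lift_ideal I \<subseteq> X_bot X \<longleftrightarrow> I \<subseteq> X"
    unfolding lift_ideal_def X_bot_def by auto
  moreover have "(\<forall>x\<in>X_bot X. \<forall>y\<in>lift_ideal I. le_bot le x y \<longrightarrow> x \<in> lift_ideal I) \<longleftrightarrow>
      (\<forall>x\<in>X. \<forall>y\<in>I. le x y \<longrightarrow> x \<in> I)"
    by (simp add: ball_lift_ideal ball_X_bot lift_ideal_def image_iff)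
  moreover have "(\<forall>x\<in>lift_ideal I. \<forall>y\<in>lift_ideal I. \<exists>z\<in>lift_ideal I. le_bot le x z \<and> le_bot le y z) \<longleftrightarrow>
      (\<forall>x\<in>I. \<forall>y\<in>I. \<exists>z\<in>I. le x z \<and> le y z)"
    using False by (simp add: ball_lift_ideal bex_lift_ideal) blast
  ultimately show ?thesis
    using False unfolding is_ideal_def lift_ideal_def by simp
qed

lemma is_ideal_X_bot_eq_lift_ideal:
  assumes "is_ideal (X_bot X) (le_bot le) K"
  shows "K = lift_ideal (Some -` K)"
proof -
  from assms obtain y where "y \<in> K" unfolding is_ideal_def by blast
  with assms have "None \<in> K" unfolding is_ideal_def by (metis None_in_X_bot le_bot.simps(1))
  show ?thesis
  proof (rule set_eqI)
    show "x \<in> K \<longleftrightarrow> x \<in> lift_ideal (Some -` K)" for x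
      using \<open>None \<in> K\<close> by (cases x) simp_all
  qed
qed

lemma Idl_X_bot: "Idl (X_bot X) (le_bot le) = lift_ideal ` insert {} (Idl X le)"
proof
  show "Idl (X_bot X) (le_bot le) \<subseteq> lift_ideal ` insert {} (Idl X le)"
  proof
    fix K assume "K \<in> Idl (X_bot X) (le_bot le)"
    then have K: "is_ideal (X_bot X) (le_bot le) K" unfolding Idl_def by simp
    then have K_eq: "K = lift_ideal (Some -` K)" by (rule is_ideal_X_bot_eq_lift_ideal)
    with K have "Some -` K = {} \<or> is_ideal X le (Some -` K)"
      using is_ideal_X_bot_lift_ideal_iff by metis
    then have "Some -` K \<in> insert {} (Idl X le)" unfolding Idl_def by blast
    then show "K \<in> lift_ideal ` insert {} (Idl X le)" using K_eq by blast
  qed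
  show "lift_ideal ` insert {} (Idl X le) \<subseteq> Idl (X_bot X) (le_bot le)"
    unfolding Idl_def using is_ideal_X_bot_lift_ideal_iff by blast
qed

lemma Idl_nonempty: "I \<in> Idl X le \<Longrightarrow> I \<noteq> {}"
  unfolding Idl_def is_ideal_def by simp

lemma Idl_X_bot_insert: "Idl (X_bot X) (le_bot le) = insert {None} (lift_ideal ` Idl X le)"
  by (simp add: Idl_X_bot lift_ideal_empty)

lemma wqo_on_Idl_X_bot:
  assumes "wqo_on (Idl X le) (\<subseteq>)"
  shows "wqo_on (Idl (X_bot X) (le_bot le)) (\<subseteq>)"
  unfolding Idl_X_bot_insert
proof (rule wqo_on_insert_bottom_image[OF assms])
  fix I assume "I \<in> Idl X le"
  then show "\<not> lift_ideal I \<subseteq> {None}" by (auto simp: lift_ideal_def dest: Idl_nonempty)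
next
  fix K assume "K \<in> insert {None} (lift_ideal ` Idl X le)"
  then show "{None} \<subseteq> K" by auto
qed simp

definition chain_unions :: "'a set set \<Rightarrow> 'a set set" where
  "chain_unions L = {\<Union>(range f) | f. (\<forall>i. f i \<in> L) \<and> (\<forall>i. f i \<subset> f (Suc i))}"

lemma Idl_level_Suc: "Idl_level X le (Suc n) = chain_unions (Idl_level X le n)"
  by (simp add: chain_unions_def)

lemma UN_range_Suc_shift:
  assumes "f 0 \<subseteq> f (Suc 0)"
  shows "\<Union>(range (\<lambda>i. f (Suc i))) = \<Union>(range f)"
proof
  show "\<Union>(range f) \<subseteq> \<Union>(range (\<lambda>i. f (Suc i)))"
    using assms by (auto simp: UN_subset_iff) (metis not0_implies_Suc rangeI subset_iff)
qed auto

lemma chain_unions_mono: "L \<subseteq> L' \<Longrightarrow> chain_unions L \<subseteq> chain_unions L'"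
  unfolding chain_unions_def by blast

lemma chain_unions_insert_empty: "chain_unions (insert {} L) = chain_unions L"
proof
  show "chain_unions (insert {} L) \<subseteq> chain_unions L"
  proof
    fix U assume "U \<in> chain_unions (insert {} L)"
    then obtain f where U: "U = \<Union>(range f)" and fL: "\<And>i. f i \<in> insert {} L"
      and mono: "\<And>i. f i \<subset> f (Suc i)"
      unfolding chain_unions_def by blast
    \<comment> \<open>only the first set of a strict chain can be empty, so dropping it changes nothing\<close>
    have "f (Suc i) \<in> L" for i using fL[of "Suc i"] mono[of i] by auto
    moreover have "U = \<Union>(range (\<lambda>i. f (Suc i)))"
      using U UN_range_Suc_shift[of f] mono[of 0] by auto
    ultimately show "U \<in> chain_unions L"
      unfolding chain_unions_def using mono by (intro CollectI exI[of _ "\<lambda>i. f (Suc i)"]) simp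
  qed
  show "chain_unions L \<subseteq> chain_unions (insert {} L)"
    by (rule chain_unions_mono) blast
qed

lemma UN_lift_ideal: "\<Union>(range (\<lambda>i. lift_ideal (g i))) = lift_ideal (\<Union>(range g))"
  unfolding lift_ideal_def by auto

lemma chain_unions_lift_ideal: "chain_unions (lift_ideal ` L) = lift_ideal ` chain_unions L"
proof
  show "chain_unions (lift_ideal ` L) \<subseteq> lift_ideal ` chain_unions L"
  proof
    fix U assume "U \<in> chain_unions (lift_ideal ` L)"
    then obtain f where U: "U = \<Union>(range f)" and fL: "\<And>i. f i \<in> lift_ideal ` L"
      and mono: "\<And>i. f i \<subset> f (Suc i)"
      unfolding chain_unions_def by blast
    from fL have "\<forall>i. \<exists>I\<in>L. f i = lift_ideal I" by blast
    then obtain g where g: "\<And>i. g i \<in> L" "\<And>i. f i = lift_ideal (g i)" by metis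
    have "g i \<subset> g (Suc i)" for i using mono[of i] by (simp add: g psubset_eq)
    then have "\<Union>(range g) \<in> chain_unions L" unfolding chain_unions_def using g(1) by blast
    moreover have "U = lift_ideal (\<Union>(range g))" using U by (simp add: g UN_lift_ideal)
    ultimately show "U \<in> lift_ideal ` chain_unions L" by blast
  qed
  show "lift_ideal ` chain_unions L \<subseteq> chain_unions (lift_ideal ` L)"
  proof
    fix U assume "U \<in> lift_ideal ` chain_unions L"
    then obtain g where U: "U = lift_ideal (\<Union>(range g))" and "\<And>i. g i \<in> L"
      and "\<And>i. g i \<subset> g (Suc i)"
      unfolding chain_unions_def by blast
    then show "U \<in> chain_unions (lift_ideal ` L)"
      unfolding chain_unions_def UN_lift_ideal[symmetric]
      by (intro CollectI exI[of _ "\<lambda>i. lift_ideal (g i)"]) (auto simp: psubset_eq)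
  qed
qed

lemma Idl_level_X_bot_Suc:
  "Idl_level (X_bot X) (le_bot le) (Suc n) = lift_ideal ` Idl_level X le (Suc n)"
proof (induction n)
  case 0
  show ?case
    by (simp only: Idl_level_Suc Idl_level.simps(1) Idl_X_bot chain_unions_lift_ideal
        chain_unions_insert_empty)
next
  case (Suc n)
  then show ?case by (simp only: Idl_level_Suc[of _ _ "Suc n"] chain_unions_lift_ideal)
qed

lemma finitely_many_levels_X_bot:
  assumes "finitely_many_levels X le"
  shows "finitely_many_levels (X_bot X) (le_bot le)"
proof -
  from assms obtain n where "Idl_level X le n = {}"
    unfolding finitely_many_levels_def by blast
  then have "Idl_level X le (Suc n) = {}" by (simp add: Idl_level_Suc chain_unions_def)
  then have "Idl_level (X_bot X) (le_bot le) (Suc n) = {}" unfolding Idl_level_X_bot_Suc by simp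
  then show ?thesis unfolding finitely_many_levels_def by blast
qed

lemma PostS_T_bot_lift_ideal: "PostS (T_bot T) (lift_ideal I) [a] = Some ` PostS T I [a]"
  unfolding PostS_def Post_def lift_ideal_def by (force simp: T_bot_Some_iff image_iff)

lemma down_X_bot_image_Some:
  "down (X_bot X) (le_bot le) (Some ` D) = (if D = {} then {} else lift_ideal (down X le D))"
  unfolding down_def X_bot_def lift_ideal_def by (auto simp: le_bot_Some_iff image_iff)

lemma principal_ideal_in_Idl: "qo_on X le \<Longrightarrow> y \<in> X \<Longrightarrow> down X le {y} \<in> Idl X le"
  unfolding Idl_def is_ideal_def down_def qo_on_def by blast

lemma compl_trans_X_bot_lift_ideal:
  assumes "compl_trans X le T a I J"
  shows "compl_trans (X_bot X) (le_bot le) (T_bot T) a (lift_ideal I) (lift_ideal J)"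
proof -
  let ?D = "down X le (PostS T I [a])"
  from assms have I: "I \<in> Idl X le" and J: "J \<in> Idl X le" and J_sub: "J \<subseteq> ?D"
    and J_max: "\<And>J'. J' \<in> Idl X le \<Longrightarrow> J \<subseteq> J' \<Longrightarrow> J' \<subseteq> ?D \<Longrightarrow> J' = J"
    unfolding compl_trans_def by auto
  have "PostS T I [a] \<noteq> {}" using J_sub Idl_nonempty[OF J] unfolding down_def by auto
  then have down_Post: "down (X_bot X) (le_bot le) (PostS (T_bot T) (lift_ideal I) [a]) = lift_ideal ?D"
    by (simp add: PostS_T_bot_lift_ideal down_X_bot_image_Some)
  have "J0 = J" if "J0 \<in> insert {} (Idl X le)" "J \<subseteq> J0" "J0 \<subseteq> ?D" for J0
    using that J_max Idl_nonempty[OF J] by blast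
  then show ?thesis
    unfolding compl_trans_def down_Post Idl_X_bot using I J J_sub by auto
qed

context
  fixes X :: "'a set" and T :: "'l \<Rightarrow> 'a \<Rightarrow> 'a \<Rightarrow> bool" and le :: "'a \<Rightarrow> 'a \<Rightarrow> bool"
  assumes qo: "qo_on X le"
    and closed: "\<forall>a x y. T a x y \<longrightarrow> x \<in> X \<and> y \<in> X"
begin

lemma compl_trans_X_bot_iff:
  "compl_trans (X_bot X) (le_bot le) (T_bot T) a K K' \<longleftrightarrow>
    (\<exists>I J. K = lift_ideal I \<and> K' = lift_ideal J \<and> compl_trans X le T a I J)"
proof
  assume trans: "compl_trans (X_bot X) (le_bot le) (T_bot T) a K K'"
  then obtain I J where K: "K = lift_ideal I" and K': "K' = lift_ideal J"
    and I: "I \<in> insert {} (Idl X le)" and J: "J \<in> insert {} (Idl X le)"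
    unfolding compl_trans_def Idl_X_bot by blast
  let ?D = "down X le (PostS T I [a])"
  let ?Y = "down (X_bot X) (le_bot le) (PostS (T_bot T) K [a])"
  from trans have K'_sub: "K' \<subseteq> ?Y"
    and K'_max: "\<And>J'. J' \<in> Idl (X_bot X) (le_bot le) \<Longrightarrow> K' \<subseteq> J' \<Longrightarrow> J' \<subseteq> ?Y \<Longrightarrow> J' = K'"
    unfolding compl_trans_def by auto
  have Post_ne: "PostS T I [a] \<noteq> {}"
    using K'_sub by (auto simp: K K' PostS_T_bot_lift_ideal down_X_bot_image_Some)
  then have Y: "?Y = lift_ideal ?D" by (simp add: K PostS_T_bot_lift_ideal down_X_bot_image_Some)
  have max: "J0 = J" if "J0 \<in> insert {} (Idl X le)" "J \<subseteq> J0" "J0 \<subseteq> ?D" for J0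
    using K'_max[of "lift_ideal J0"] that by (auto simp: K' Y Idl_X_bot)
  have "I \<noteq> {}" using Post_ne unfolding PostS_def by auto
  moreover have "J \<noteq> {}"
  proof
    assume "J = {}"
    from Post_ne obtain y where y: "y \<in> PostS T I [a]" by blast
    then have "y \<in> X" using closed unfolding PostS_def Post_def by auto
    then have "down X le {y} \<in> Idl X le" by (rule principal_ideal_in_Idl[OF qo])
    moreover have "down X le {y} \<subseteq> ?D" using y unfolding down_def by auto
    ultimately have "down X le {y} = {}" using max \<open>J = {}\<close> by blast
    then show False using \<open>down X le {y} \<in> Idl X le\<close> Idl_nonempty by blast
  qed
  moreover have "J \<subseteq> ?D" using K'_sub by (simp add: K' Y)
  ultimately have "compl_trans X le T a I J"
    unfolding compl_trans_def using I J max by auto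
  then show "\<exists>I J. K = lift_ideal I \<and> K' = lift_ideal J \<and> compl_trans X le T a I J"
    using K K' by blast
qed (auto intro: compl_trans_X_bot_lift_ideal)

lemma compl_trans_X_bot_above:
  assumes "compl_trans (X_bot X) (le_bot le) (T_bot T) a K K'"
    and "K \<subseteq> K2" and "K2 \<in> Idl (X_bot X) (le_bot le)"
  obtains I J I2 where "K = lift_ideal I" "K' = lift_ideal J" "K2 = lift_ideal I2"
    "compl_trans X le T a I J" "I2 \<in> Idl X le" "I \<subseteq> I2"
proof -
  from assms(1) obtain I J where IJ: "K = lift_ideal I" "K' = lift_ideal J" "compl_trans X le T a I J"
    unfolding compl_trans_X_bot_iff by blast
  then have "I \<noteq> {}" unfolding compl_trans_def by (auto dest: Idl_nonempty)
  moreover from assms(3) obtain I2 where "K2 = lift_ideal I2" "I2 \<in> insert {} (Idl X le)"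
    unfolding Idl_X_bot by blast
  moreover from this have "I \<subseteq> I2" using assms(2) IJ(1) by simp
  ultimately show ?thesis using that IJ by blast
qed

lemma wsts_compl_X_bot:
  assumes "wsts (Idl X le) Sig (compl_trans X le T) (\<subseteq>)"
  shows "wsts (Idl (X_bot X) (le_bot le)) Sig (compl_trans (X_bot X) (le_bot le) (T_bot T)) (\<subseteq>)"
  unfolding wsts_def ts_def
proof (intro conjI allI impI ballI)
  show "finite Sig" using assms unfolding wsts_def ts_def by blast
  show "wqo_on (Idl (X_bot X) (le_bot le)) (\<subseteq>)"
    using assms unfolding wsts_def by (intro wqo_on_Idl_X_bot) blast
  then show "qo_on (Idl (X_bot X) (le_bot le)) (\<subseteq>)" unfolding wqo_on_def by blast
next
  fix a K K' assume "compl_trans (X_bot X) (le_bot le) (T_bot T) a K K'"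
  then show "K \<in> Idl (X_bot X) (le_bot le)" "K' \<in> Idl (X_bot X) (le_bot le)"
    unfolding compl_trans_def by blast+
next
  fix a K K' K2
  assume a: "a \<in> Sig"
  assume "compl_trans (X_bot X) (le_bot le) (T_bot T) a K K'"
    and "K \<subseteq> K2" and "K2 \<in> Idl (X_bot X) (le_bot le)"
  then obtain I J I2 where "K = lift_ideal I" and K: "K' = lift_ideal J" "K2 = lift_ideal I2"
    and "compl_trans X le T a I J" "I2 \<in> Idl X le" "I \<subseteq> I2"
    by (rule compl_trans_X_bot_above)
  with assms a obtain w J2 where "w \<in> lists Sig" "J \<subseteq> J2"
    and "steps (compl_trans X le T) w I2 J2"
    unfolding wsts_def by blast
  moreover from this(3) have "steps (compl_trans (X_bot X) (le_bot le) (T_bot T)) w K2 (lift_ideal J2)"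
    unfolding K by (rule steps_map) (rule compl_trans_X_bot_lift_ideal)
  ultimately show "\<exists>w\<in>lists Sig. \<exists>K2'. steps (compl_trans (X_bot X) (le_bot le) (T_bot T)) w K2 K2' \<and> K' \<subseteq> K2'"
    using K by (intro bexI[of _ w] exI[of _ "lift_ideal J2"]) simp_all
qed

lemma deterministic_compl_X_bot:
  "deterministic Sig (compl_trans X le T) \<Longrightarrow>
    deterministic Sig (compl_trans (X_bot X) (le_bot le) (T_bot T))"
  unfolding deterministic_def compl_trans_X_bot_iff by force

lemma strong_strict_mono_compl_X_bot:
  assumes "strong_strict_mono (Idl X le) Sig (compl_trans X le T) (\<subseteq>)"
  shows "strong_strict_mono (Idl (X_bot X) (le_bot le)) Sig
    (compl_trans (X_bot X) (le_bot le) (T_bot T)) (\<subseteq>)"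
  unfolding strong_strict_mono_def strong_mono_def
proof (intro conjI allI impI ballI)
  fix a K K' K2
  assume a: "a \<in> Sig"
  assume "compl_trans (X_bot X) (le_bot le) (T_bot T) a K K'"
    and "K \<subseteq> K2" and "K2 \<in> Idl (X_bot X) (le_bot le)"
  then obtain I J I2 where "K = lift_ideal I" and K: "K' = lift_ideal J" "K2 = lift_ideal I2"
    and "compl_trans X le T a I J" "I2 \<in> Idl X le" "I \<subseteq> I2"
    by (rule compl_trans_X_bot_above)
  with assms a obtain J2 where "compl_trans X le T a I2 J2" "J \<subseteq> J2"
    unfolding strong_strict_mono_def strong_mono_def by blast
  then show "\<exists>K2'. compl_trans (X_bot X) (le_bot le) (T_bot T) a K2 K2' \<and> K' \<subseteq> K2'"
    using K by (intro exI[of _ "lift_ideal J2"]) (simp add: compl_trans_X_bot_lift_ideal)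
next
  fix a K K' K2
  assume a: "a \<in> Sig"
  assume step: "compl_trans (X_bot X) (le_bot le) (T_bot T) a K K'"
    and K2: "K2 \<in> Idl (X_bot X) (le_bot le)" and strict: "lt_of (\<subseteq>) K K2"
  from strict have "K \<subseteq> K2" unfolding lt_of_def by blast
  with step obtain I J I2 where K: "K = lift_ideal I" "K' = lift_ideal J" "K2 = lift_ideal I2"
    and "compl_trans X le T a I J" "I2 \<in> Idl X le" "I \<subseteq> I2"
    using K2 by (rule compl_trans_X_bot_above)
  moreover from strict have "lt_of (\<subseteq>) I I2" unfolding K lt_of_def by simp
  ultimately obtain J2 where "compl_trans X le T a I2 J2" "lt_of (\<subseteq>) J J2"
    using assms a unfolding strong_strict_mono_def by blast
  then show "\<exists>K2'. compl_trans (X_bot X) (le_bot le) (T_bot T) a K2 K2' \<and> lt_of (\<subseteq>) K' K2'"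
    using K by (intro exI[of _ "lift_ideal J2"]) (simp add: compl_trans_X_bot_lift_ideal lt_of_def)
qed

end

theorem proposition27:
  fixes X :: "'a set" and Sig :: "'l set"
    and T :: "'l \<Rightarrow> 'a \<Rightarrow> 'a \<Rightarrow> bool" and le :: "'a \<Rightarrow> 'a \<Rightarrow> bool"
  assumes "very_wsts X Sig T le"
  shows "very_wsts (X_bot X) Sig (T_bot T) (le_bot le)
    \<and> (positive_sys X Sig T le \<longrightarrow> positive_sys (X_bot X) Sig (T_bot T) (le_bot le))"
proof -
  from assms have wsts: "wsts X Sig T le" and mono: "strong_mono X Sig T le"
    and compl_wsts: "wsts (Idl X le) Sig (compl_trans X le T) (\<subseteq>)"
    and compl_det: "deterministic Sig (compl_trans X le T)"
    and compl_mono: "strong_strict_mono (Idl X le) Sig (compl_trans X le T) (\<subseteq>)"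
    and levels: "finitely_many_levels X le"
    unfolding very_wsts_def by blast+
  from wsts have qo: "qo_on X le" and closed: "\<forall>a x y. T a x y \<longrightarrow> x \<in> X \<and> y \<in> X"
    unfolding wsts_def ts_def by blast+
  have "very_wsts (X_bot X) Sig (T_bot T) (le_bot le)"
    unfolding very_wsts_def
    using wsts_X_bot[OF wsts] strong_mono_X_bot[OF mono]
      wsts_compl_X_bot[OF qo closed compl_wsts]
      deterministic_compl_X_bot[OF qo closed compl_det]
      strong_strict_mono_compl_X_bot[OF qo closed compl_mono]
      finitely_many_levels_X_bot[OF levels]
    by blast
  then show ?thesis using positive_sys_X_bot[OF qo] by blast
qed

end
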